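(* Let $f:\mathbb{R}^n\to\mathbb{R}$ be differentiable and pseudo-convex, with $\nabla f$ $L$-Lipschitz continuous, and assume the stationary set $X^*$ is non-empty. Then the sequence $\{x^k\}$ generated by Algorithm 2 (run without stopping, with $\nabla f(x^k)\ne0$ for all $k$) converges to a point of $X^*$.
   Context: Pseudo-convex: $\nabla f$ pseudo-monotone, i.e. $\langle \nabla f(x),y-x\rangle\ge0\Rightarrow\langle\nabla f(y),y-x\rangle\ge0$ for all $x,y$. $X^*=\{x:\nabla f(x)=0\}$. Algorithm 2: parameters $0<\mu<\nu<1$, $0<\underline{h}<1\le\gamma_0^0\le\overline{h}$, $\theta\in(0,1)$, $\tau>1$, $\beta\in\left(\frac{1-\sqrt{1-\nu^2}}{\nu^2},1\right]$, starting point $x^0$. At iteration $k$: for $\gamma>0$ let $z^k(\gamma)=x^k-\gamma\nabla f(x^k)$ and $r_k(\gamma)=\gamma\|\nabla f(z^k(\gamma))-\nabla f(x^k)\|/\|z^k(\gamma)-x^k\|$; starting from $\gamma_0^k$, while $r_k(\gamma_l^k)>\nu$ set $\gamma_{l+1}^k=\gamma_l^k\theta\min\{1,1/r_k(\gamma_l^k)\}$; let $h_k$ be the first $\gamma_l^k$ with $r_k(\gamma_l^k)\le\nu$. Then $z^k=x^k-h_k\nabla f(x^k)$, $x^{k+1}=x^k-h_k\big(\nabla f(x^k)-\beta(\nabla f(x^k)-\nabla f(z^k))\big)$, and $\gamma_0^{k+1}=\mathbf{P}_{[\underline{h},\overline{h}]}(\tau h_k)$ if $r_k(h_k)\le\mu$,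 else $\gamma_0^{k+1}=\mathbf{P}_{[\underline{h},\overline{h}]}(h_k)$, where $\mathbf{P}_{[a,b]}$ is projection onto $[a,b]$. *)

theory Defs
  imports "HOL-Analysis.Analysis"
begin

definition zpt :: "('a::real_normed_vector \<Rightarrow> 'a) \<Rightarrow> 'a \<Rightarrow> real \<Rightarrow> 'a" where
  "zpt g x \<gamma> = x - \<gamma> *\<^sub>R g x"

definition ratio :: "('a::real_normed_vector \<Rightarrow> 'a) \<Rightarrow> 'a \<Rightarrow> real \<Rightarrow> real" where
  "ratio g x \<gamma> = \<gamma> * norm (g (zpt g x \<gamma>) - g x) / norm (zpt g x \<gamma> - x)"

fun bt :: "('a::real_normed_vector \<Rightarrow> 'a) \<Rightarrow> real \<Rightarrow> real \<Rightarrow> 'a \<Rightarrow> real \<Rightarrow> nat \<Rightarrow> real" where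
  "bt g \<nu> \<theta> x \<gamma>0 0 = \<gamma>0"
| "bt g \<nu> \<theta> x \<gamma>0 (Suc l) =
     (let \<gamma> = bt g \<nu> \<theta> x \<gamma>0 l; r = ratio g x \<gamma>
      in if r > \<nu> then \<gamma> * \<theta> * min 1 (1 / r) else \<gamma>)"

definition proj :: "real \<Rightarrow> real \<Rightarrow> real \<Rightarrow> real" where
  "proj a b t = max a (min b t)"

text \<open>The sequences x (iterates), gam0 (initial trial steps gamma_0^k) and h (accepted steps h_k)
  are generated by Algorithm 2 with gradient g, parameters mu nu hlo hup theta tau beta, start x0.\<close>
definition alg2 ::
  "('a::real_normed_vector \<Rightarrow> 'a) \<Rightarrow> real \<Rightarrow> real \<Rightarrow> real \<Rightarrow> real \<Rightarrow> real \<Rightarrow> real \<Rightarrow> real \<Rightarrow> 'a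
   \<Rightarrow> (nat \<Rightarrow> 'a) \<Rightarrow> (nat \<Rightarrow> real) \<Rightarrow> (nat \<Rightarrow> real) \<Rightarrow> bool" where
  "alg2 g \<mu> \<nu> hlo hup \<theta> \<tau> \<beta> x0 x gam0 h \<longleftrightarrow>
     x 0 = x0 \<and>
     (\<forall>k. (\<exists>l. h k = bt g \<nu> \<theta> (x k) (gam0 k) l \<and> ratio g (x k) (h k) \<le> \<nu> \<and>
                 (\<forall>j<l. ratio g (x k) (bt g \<nu> \<theta> (x k) (gam0 k) j) > \<nu>)) \<and>
          x (Suc k) = x k - h k *\<^sub>R (g (x k) - \<beta> *\<^sub>R (g (x k) - g (zpt g (x k) (h k)))) \<and>
          gam0 (Suc k) = (if ratio g (x k) (h k) \<le> \<mu> then proj hlo hup (\<tau> * h k)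
                          else proj hlo hup (h k)))"

end

theory Submission
  imports Defs
begin

text \<open>Pseudo-monotonicity turns every stationary point \<open>p\<close> into a solution of the Minty
  variational inequality \<open>g z \<bullet> (z - p) \<ge> 0\<close>. Applied at \<open>x\<^sub>k\<close> and at the trial point
  \<open>z\<^sub>k\<close>, together with the acceptance test \<open>r\<^sub>k(h\<^sub>k) \<le> \<nu>\<close>, it yields the Fejer inequality
  \<open>\<parallel>x\<^sub>k\<^sub>+\<^sub>1 - p\<parallel>\<^sup>2 \<le> \<parallel>x\<^sub>k - p\<parallel>\<^sup>2 - (2\<beta> - 1 - \<beta>\<^sup>2\<nu>\<^sup>2) h\<^sub>k\<^sup>2 \<parallel>g x\<^sub>k\<parallel>\<^sup>2\<close>, whose coefficient
  is positive precisely because of the lower bound on \<open>\<beta>\<close>. By Lipschitz continuity the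
  backtracking never pushes \<open>h\<^sub>k\<close> below \<open>min h\<^sub>l\<^sub>o (\<theta>\<nu>/L)\<close>, so \<open>g x\<^sub>k \<rightarrow> 0\<close>. The iterates are
  bounded, every cluster point is stationary, and Fejer monotonicity with respect to one
  cluster point forces the whole sequence to converge to it.\<close>

text \<open>Used with \<open>a = x\<^sub>k - p\<close>, \<open>e = h\<^sub>k g x\<^sub>k\<close> and \<open>w = h\<^sub>k (g z\<^sub>k - g x\<^sub>k)\<close>, so that
  \<open>a - e = z\<^sub>k - p\<close> and \<open>a - (e + \<beta> w) = x\<^sub>k\<^sub>+\<^sub>1 - p\<close>; the first two hypotheses are the Minty
  inequality at \<open>x\<^sub>k\<close> and at \<open>z\<^sub>k\<close>, the third is the acceptance test.\<close>

lemma extragradient_step_norm_le: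
  fixes a e w :: "'a::real_inner"
  assumes "0 \<le> e \<bullet> a" and "0 \<le> (e + w) \<bullet> (a - e)" and "norm w \<le> \<nu> * norm e"
    and "0 \<le> \<beta>" and "\<beta> \<le> 1"
  shows "(norm (a - (e + \<beta> *\<^sub>R w)))\<^sup>2 \<le> (norm a)\<^sup>2 - (2*\<beta> - 1 - \<beta>\<^sup>2*\<nu>\<^sup>2) * (norm e)\<^sup>2"
proof -
  have expand: "(norm (a - (e + \<beta> *\<^sub>R w)))\<^sup>2
      = a\<bullet>a - 2*(e\<bullet>a) - 2*\<beta>*(w\<bullet>a) + e\<bullet>e + 2*\<beta>*(e\<bullet>w) + \<beta>\<^sup>2*(w\<bullet>w)"
    unfolding power2_norm_eq_inner
    by (simp add: inner_diff inner_add algebra_simps inner_commute power2_eq_square)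
  have "e\<bullet>e + e\<bullet>w \<le> e\<bullet>a + w\<bullet>a"
    using assms(2) by (simp add: inner_diff inner_add algebra_simps inner_commute)
  then have "\<beta>*(e\<bullet>e + e\<bullet>w) \<le> \<beta>*(e\<bullet>a + w\<bullet>a)"
    using \<open>0 \<le> \<beta>\<close> by (rule mult_left_mono)
  moreover have "0 \<le> (1 - \<beta>)*(e\<bullet>a)"
    using assms(1,5) by simp
  moreover have "(norm w)\<^sup>2 \<le> (\<nu> * norm e)\<^sup>2"
    using assms(3) by (simp add: power_mono)
  then have "\<beta>\<^sup>2*(w\<bullet>w) \<le> \<beta>\<^sup>2*(\<nu>\<^sup>2 * (e\<bullet>e))"
    by (intro mult_left_mono) (auto simp: power2_norm_eq_inner power_mult_distrib)
  ultimately show ?thesis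
    unfolding expand by (simp add: power2_norm_eq_inner algebra_simps)
qed

lemma extragradient_coeff_pos:
  fixes \<nu> \<beta> :: real
  assumes "0 < \<nu>" "\<nu> < 1" "(1 - sqrt (1 - \<nu>\<^sup>2)) / \<nu>\<^sup>2 < \<beta>" "\<beta> \<le> 1"
  shows "0 < 2*\<beta> - 1 - \<beta>\<^sup>2*\<nu>\<^sup>2"
proof -
  define s where "s = sqrt (1 - \<nu>\<^sup>2)"
  define t where "t = \<nu>\<^sup>2 * \<beta>"
  have "\<nu>\<^sup>2 < 1\<^sup>2"
    using assms by (intro power_strict_mono) auto
  then have \<nu>2: "0 < \<nu>\<^sup>2" "\<nu>\<^sup>2 < 1"
    using assms by auto
  then have s2: "s\<^sup>2 = 1 - \<nu>\<^sup>2"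
    unfolding s_def by simp
  have "1 - s < t"
    using assms(3) \<nu>2(1) unfolding s_def t_def by (simp add: pos_divide_less_eq mult.commute)
  moreover have "t < 1"
    using \<nu>2 assms(4) mult_left_mono[of \<beta> 1 "\<nu>\<^sup>2"] unfolding t_def by linarith
  ultimately have "(1 - t)\<^sup>2 < s\<^sup>2"
    by (intro power_strict_mono) auto
  moreover have "\<nu>\<^sup>2 * (2*\<beta> - 1 - \<beta>\<^sup>2*\<nu>\<^sup>2) = (1 - \<nu>\<^sup>2) - (1 - t)\<^sup>2"
    unfolding t_def by (simp add: power2_eq_square algebra_simps)
  ultimately have "0 < \<nu>\<^sup>2 * (2*\<beta> - 1 - \<beta>\<^sup>2*\<nu>\<^sup>2)"
    using s2 by linarith
  then show ?thesis
    using \<nu>2 by (simp add: zero_less_mult_iff)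
qed

lemma bt_pos:
  assumes "0 < \<gamma>0" "0 < \<nu>" "0 < \<theta>"
  shows "0 < bt g \<nu> \<theta> x \<gamma>0 l"
  using assms by (induction l) (auto simp: Let_def)

lemma ratio_le_lipschitz:
  fixes g :: "'a::real_normed_vector \<Rightarrow> 'a"
  assumes lip: "\<And>y z. norm (g y - g z) \<le> L * norm (y - z)" and "0 < L" "0 \<le> \<gamma>"
  shows "ratio g x \<gamma> \<le> \<gamma> * L"
proof (cases "zpt g x \<gamma> = x")
  case True
  then show ?thesis
    unfolding ratio_def using assms(2,3) by simp
next
  case False
  have "\<gamma> * norm (g (zpt g x \<gamma>) - g x) \<le> \<gamma> * (L * norm (zpt g x \<gamma> - x))"
    using lip \<open>0 \<le> \<gamma>\<close> by (intro mult_left_mono) auto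
  then show ?thesis
    unfolding ratio_def using False by (simp add: divide_le_eq)
qed

lemma backtrack_step_ge:
  fixes r \<gamma> \<theta> \<nu> L :: real
  assumes "r \<le> \<gamma> * L" "\<nu> < r" "0 < \<nu>" "\<nu> < 1" "0 < \<theta>" "0 < L" "0 < \<gamma>"
  shows "\<theta> * \<nu> / L \<le> \<gamma> * \<theta> * min 1 (1 / r)"
proof (cases "r \<le> 1")
  case True
  have "\<theta> * \<nu> \<le> \<theta> * (\<gamma> * L)"
    using assms by simp
  then show ?thesis
    using True assms by (simp add: divide_le_eq algebra_simps)
next
  case False
  have "\<nu> * r \<le> r"
    using assms False by (intro mult_left_le_one_le) auto
  then have "\<nu> * r \<le> \<gamma> * L"
    using assms(1) by linarith
  then have "\<theta> * (\<nu> / L) \<le> \<theta> * (\<gamma> / r)"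
    using assms False by (intro mult_left_mono) (auto simp: field_simps)
  then show ?thesis
    using False by (simp add: ac_simps)
qed

lemma decrement_tendsto_zero:
  fixes a b :: "nat \<Rightarrow> real"
  assumes decr: "\<And>k. a (Suc k) + b k \<le> a k" and "\<And>k. 0 \<le> a k" and "\<And>k. 0 \<le> b k"
  shows "b \<longlonglongrightarrow> 0"
proof -
  have partial_sum: "(\<Sum>k<n. b k) \<le> a 0 - a n" for n
  proof (induction n)
    case (Suc n)
    then show ?case using decr[of n] by simp
  qed simp
  have "(\<Sum>k<n. b k) \<le> a 0" for n
    using partial_sum[of n] assms(2)[of n] by linarith
  then have "summable b"
    using assms(3) by (intro summableI_nonneg_bounded[where x = "a 0"])
  then show ?thesis
    by (rule summable_LIMSEQ_zero)
qed

lemma fejer_monotone_convergent: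
  fixes x :: "nat \<Rightarrow> 'a::heine_borel"
  assumes "s \<in> S"
    and fejer: "\<And>p k. p \<in> S \<Longrightarrow> dist (x (Suc k)) p \<le> dist (x k) p"
    and cluster: "\<And>r l. strict_mono r \<Longrightarrow> (x \<circ> r) \<longlonglongrightarrow> l \<Longrightarrow> l \<in> S"
  shows "\<exists>l\<in>S. x \<longlonglongrightarrow> l"
proof -
  have dist_le: "dist (x n) p \<le> dist (x m) p" if "p \<in> S" "m \<le> n" for p m n
    using decseqD[OF decseq_SucI[of "\<lambda>k. dist (x k) p"]] fejer that by blast
  have "bounded (range x)"
    unfolding bounded_def using dist_le[OF \<open>s \<in> S\<close>, of 0]
    by (metis dist_commute rangeE zero_le)
  then obtain l r where r: "strict_mono r" "(x \<circ> r) \<longlonglongrightarrow> l"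
    using bounded_imp_convergent_subsequence by blast
  then have "l \<in> S"
    by (rule cluster)
  have "x \<longlonglongrightarrow> l"
  proof (rule metric_LIMSEQ_I)
    fix \<epsilon> :: real
    assume "0 < \<epsilon>"
    then obtain j where "dist (x (r j)) l < \<epsilon>"
      using metric_LIMSEQ_D[OF r(2)] by fastforce
    then show "\<exists>N. \<forall>n\<ge>N. dist (x n) l < \<epsilon>"
      using dist_le[OF \<open>l \<in> S\<close>, of "r j"] by (meson le_less_trans)
  qed
  with \<open>l \<in> S\<close> show ?thesis
    by blast
qed

locale alg2_run =
  fixes g :: "'a::real_inner \<Rightarrow> 'a" and L \<mu> \<nu> hlo hup \<theta> \<tau> \<beta> :: real and x0 :: 'a
    and x :: "nat \<Rightarrow> 'a" and gam0 h :: "nat \<Rightarrow> real"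
  assumes run: "alg2 g \<mu> \<nu> hlo hup \<theta> \<tau> \<beta> x0 x gam0 h"
    and pseudo: "\<And>y z. g y \<bullet> (z - y) \<ge> 0 \<Longrightarrow> g z \<bullet> (z - y) \<ge> 0"
    and lip: "\<And>y z. norm (g y - g z) \<le> L * norm (y - z)"
    and L_pos: "0 < L"
    and \<nu>: "0 < \<nu>" "\<nu> < 1"
    and hlo: "0 < hlo" "hlo \<le> gam0 0"
    and \<theta>: "0 < \<theta>"
    and \<beta>: "(1 - sqrt (1 - \<nu>\<^sup>2)) / \<nu>\<^sup>2 < \<beta>" "\<beta> \<le> 1"
    and nonstat: "\<And>k. g (x k) \<noteq> 0"
begin

lemma iterate_Suc:
  "x (Suc k) = x k - h k *\<^sub>R (g (x k) - \<beta> *\<^sub>R (g (x k) - g (zpt g (x k) (h k))))"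
  using run unfolding alg2_def by blast

lemma ratio_accepted: "ratio g (x k) (h k) \<le> \<nu>"
  using run unfolding alg2_def by blast

lemma initial_step_ge: "hlo \<le> gam0 k"
proof (cases k)
  case 0
  then show ?thesis using hlo by simp
next
  case (Suc j)
  then show ?thesis using run unfolding alg2_def proj_def by auto
qed

lemma step_ge: "min hlo (\<theta> * \<nu> / L) \<le> h k"
proof -
  obtain l where l: "h k = bt g \<nu> \<theta> (x k) (gam0 k) l"
    "\<forall>j<l. \<nu> < ratio g (x k) (bt g \<nu> \<theta> (x k) (gam0 k) j)"
    using run unfolding alg2_def by blast
  show ?thesis
  proof (cases l)
    case 0
    then show ?thesis using l initial_step_ge[of k] by simp
  next
    case (Suc j)
    define \<gamma> where "\<gamma> = bt g \<nu> \<theta> (x k) (gam0 k) j"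
    have "0 < \<gamma>"
      unfolding \<gamma>_def using bt_pos initial_step_ge hlo(1) \<nu>(1) \<theta> by (meson less_le_trans)
    have rejected: "\<nu> < ratio g (x k) \<gamma>"
      using l Suc unfolding \<gamma>_def by simp
    then have "h k = \<gamma> * \<theta> * min 1 (1 / ratio g (x k) \<gamma>)"
      using l Suc unfolding \<gamma>_def by (simp add: Let_def)
    then have "\<theta> * \<nu> / L \<le> h k"
      using backtrack_step_ge[OF ratio_le_lipschitz[OF lip L_pos] rejected \<nu> \<theta> L_pos \<open>0 < \<gamma>\<close>]
        \<open>0 < \<gamma>\<close> by simp
    then show ?thesis by simp
  qed
qed

lemma step_pos: "0 < h k"
proof -
  have "0 < min hlo (\<theta> * \<nu> / L)"
    using hlo(1) \<nu>(1) \<theta> L_pos by simp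
  then show ?thesis
    using step_ge[of k] by linarith
qed

lemma fejer_inequality:
  assumes "g p = 0"
  shows "(norm (x (Suc k) - p))\<^sup>2 \<le> (norm (x k - p))\<^sup>2 - (2*\<beta> - 1 - \<beta>\<^sup>2*\<nu>\<^sup>2) * (norm (h k *\<^sub>R g (x k)))\<^sup>2"
proof -
  define z where "z = zpt g (x k) (h k)"
  define e where "e = h k *\<^sub>R g (x k)"
  define w where "w = h k *\<^sub>R (g z - g (x k))"
  have minty: "0 \<le> g y \<bullet> (y - p)" for y
    using pseudo[of p y] \<open>g p = 0\<close> by simp
  have z: "z = x k - e"
    unfolding z_def e_def zpt_def by simp
  have "0 \<le> e \<bullet> (x k - p)"
    unfolding e_def using minty[of "x k"] step_pos[of k] by simp
  moreover have "e + w = h k *\<^sub>R g z"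
    unfolding e_def w_def by (simp add: algebra_simps)
  then have "(e + w) \<bullet> (x k - p - e) = h k * (g z \<bullet> (z - p))"
    unfolding z by (simp add: algebra_simps)
  then have "0 \<le> (e + w) \<bullet> (x k - p - e)"
    using minty[of z] step_pos[of k] by simp
  moreover have "ratio g (x k) (h k) = norm w / norm e"
    unfolding ratio_def w_def z_def[symmetric] z using step_pos[of k] by simp
  then have "norm w \<le> \<nu> * norm e"
    using ratio_accepted[of k] nonstat[of k] step_pos[of k]
    by (simp add: divide_le_eq e_def split: if_splits)
  moreover have "x (Suc k) - p = (x k - p) - (e + \<beta> *\<^sub>R w)"
    unfolding iterate_Suc e_def w_def z_def by (simp add: algebra_simps)
  moreover have "0 \<le> \<beta>"
    using extragradient_coeff_pos[OF \<nu> \<beta>] by (smt (verit) zero_le_power2 mult_nonneg_nonneg)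
  ultimately show ?thesis
    unfolding e_def using extragradient_step_norm_le \<beta>(2) by metis
qed

lemma dist_stationary_decreasing:
  assumes "g p = 0"
  shows "dist (x (Suc k)) p \<le> dist (x k) p"
proof -
  have "(norm (x (Suc k) - p))\<^sup>2 \<le> (norm (x k - p))\<^sup>2"
    using fejer_inequality[OF assms, of k] extragradient_coeff_pos[OF \<nu> \<beta>]
    by (smt (verit) mult_nonneg_nonneg zero_le_power2)
  then show ?thesis
    by (simp add: dist_norm power2_le_iff_abs_le)
qed

lemma grad_tendsto_zero:
  assumes "g p = 0"
  shows "(\<lambda>k. g (x k)) \<longlonglongrightarrow> 0"
proof -
  define c where "c = 2*\<beta> - 1 - \<beta>\<^sup>2*\<nu>\<^sup>2"
  define m where "m = min hlo (\<theta> * \<nu> / L)"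
  have "0 < c" "0 < m"
    unfolding c_def m_def using extragradient_coeff_pos[OF \<nu> \<beta>] hlo \<nu> \<theta> L_pos by auto
  have "(norm (x (Suc k) - p))\<^sup>2 + c * m\<^sup>2 * (norm (g (x k)))\<^sup>2 \<le> (norm (x k - p))\<^sup>2" for k
  proof -
    have "m\<^sup>2 \<le> (h k)\<^sup>2"
      using step_ge[of k] \<open>0 < m\<close> unfolding m_def by (intro power_mono) auto
    then have "c * m\<^sup>2 * (norm (g (x k)))\<^sup>2 \<le> c * (norm (h k *\<^sub>R g (x k)))\<^sup>2"
      using \<open>0 < c\<close> by (simp add: power_mult_distrib mult_left_mono mult_right_mono)
    then show ?thesis
      using fejer_inequality[OF assms, of k] unfolding c_def by linarith
  qed
  then have "(\<lambda>k. c * m\<^sup>2 * (norm (g (x k)))\<^sup>2) \<longlonglongrightarrow> 0"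
    using \<open>0 < c\<close> by (intro decrement_tendsto_zero[where a = "\<lambda>k. (norm (x k - p))\<^sup>2"]) auto
  then have "(\<lambda>k. (norm (g (x k)))\<^sup>2) \<longlonglongrightarrow> 0"
    using tendsto_mult_left_iff[of "c * m\<^sup>2"] \<open>0 < c\<close> \<open>0 < m\<close> by (simp add: mult.assoc)
  then have "(\<lambda>k. sqrt ((norm (g (x k)))\<^sup>2)) \<longlonglongrightarrow> sqrt 0"
    by (rule tendsto_real_sqrt)
  then show ?thesis
    by (simp add: tendsto_norm_zero_iff)
qed

lemma cluster_point_stationary:
  assumes "g p = 0" and "strict_mono r" and "(x \<circ> r) \<longlonglongrightarrow> l"
  shows "g l = 0"
proof -
  have "continuous_on UNIV g"
    using lip L_pos by (intro lipschitz_on_continuous_on[where L = L]) (auto simp: lipschitz_on_def dist_norm)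
  then have "isCont g l"
    by (simp add: continuous_on_eq_continuous_at)
  then have "(\<lambda>j. g ((x \<circ> r) j)) \<longlonglongrightarrow> g l"
    using assms(3) by (rule isCont_tendsto_compose)
  moreover have "(\<lambda>j. g ((x \<circ> r) j)) \<longlonglongrightarrow> 0"
    using LIMSEQ_subseq_LIMSEQ[OF grad_tendsto_zero[OF assms(1)] assms(2)] by (simp add: o_def)
  ultimately show ?thesis
    by (rule LIMSEQ_unique)
qed

end

text \<open>Only the operator \<open>g\<close> enters the argument.\<close>

theorem theorem3:
  fixes f :: "real ^ 'n \<Rightarrow> real" and g :: "real ^ 'n \<Rightarrow> real ^ 'n"
    and L \<mu> \<nu> hlo hup \<theta> \<tau> \<beta> :: real and x0 :: "real ^ 'n"
    and x :: "nat \<Rightarrow> real ^ 'n" and gam0 h :: "nat \<Rightarrow> real"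
  assumes grad: "\<And>y. (f has_derivative (\<lambda>v. g y \<bullet> v)) (at y)"
    and pseudo: "\<And>y z. g y \<bullet> (z - y) \<ge> 0 \<Longrightarrow> g z \<bullet> (z - y) \<ge> 0"
    and lip: "\<And>y z. norm (g y - g z) \<le> L * norm (y - z)"
    and nonempty: "{y. g y = 0} \<noteq> {}"
    and params: "0 < \<mu>" "\<mu> < \<nu>" "\<nu> < 1" "0 < hlo" "hlo < 1" "1 \<le> gam0 0" "gam0 0 \<le> hup"
      "0 < \<theta>" "\<theta> < 1" "\<tau> > 1"
      "(1 - sqrt (1 - \<nu>\<^sup>2)) / \<nu>\<^sup>2 < \<beta>" "\<beta> \<le> 1"
    and run: "alg2 g \<mu> \<nu> hlo hup \<theta> \<tau> \<beta> x0 x gam0 h"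
    and nonstat: "\<And>k. g (x k) \<noteq> 0"
  shows "\<exists>xs. g xs = 0 \<and> x \<longlonglongrightarrow> xs"
proof -
  obtain p where p: "g p = 0"
    using nonempty by auto
  have "0 < norm (g (x 0) - g p)"
    using p nonstat[of 0] by simp
  also have "\<dots> \<le> L * norm (x 0 - p)"
    by (rule lip)
  finally have "0 < L"
    by (simp add: zero_less_mult_iff)
  then interpret alg2_run g L \<mu> \<nu> hlo hup \<theta> \<tau> \<beta> x0 x gam0 h
    by unfold_locales (use pseudo lip params run nonstat in \<open>blast | linarith\<close>)+
  have "\<exists>l\<in>{y. g y = 0}. x \<longlonglongrightarrow> l"
    by (rule fejer_monotone_convergent[where s = p])
      (use p dist_stationary_decreasing cluster_point_stationary[OF p] in simp_all)
  then show ?thesis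
    by blast
qed

end
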